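(* Let $a,b,c\ge 0$, $r\ge 0$, and for $t\in[0,1]$ let $$r_{h.d.}(t)=\min\big\{t\max(\alpha,\gamma)+(1-t)\gamma,\ t\gamma+(1-t)\max(\beta,\gamma)\big\}.$$ The DMT achieved by static QMF on the half-duplex $(a,b,c)$-relay channel, $$d_{QMF}(r)=\min\Big\{a+b+c-\alpha-\beta-\gamma \;:\; r_{h.d.}(1/2)\le r,\ 0\le\alpha\le a,\ 0\le\beta\le b,\ 0\le\gamma\le c\Big\},$$ is given by $$d_{QMF}(r)=\begin{cases}\big(\min(a,b)-r\big)^{+}+(c-r)^{+} & \text{if } c>\min(a,b),\\ \big(\min(a,b)+c-2r\big)^{+} & \text{if } c\le\min(a,b).\end{cases}$$
   Context: The $(a,b,c)$-relay channel: source $S$, half-duplex relay $R$ (cannot transmit and receive simultaneously), destination $D$; the source signal is broadcast to $R$ and $D$, and source and relay signals superpose at $D$. Channel gains $h_{sr},h_{rd},h_{sd}$ are i.i.d. $\mathcal{CN}(0,1)$, quasi-static, known only at receivers; average SNRs of S-R, R-D, S-D are $\rho^a,\rho^b,\rho^c$. The exponential orders are $\alpha=\lim_{\rho\to\infty}\frac{\log(1+|h_{sr}|^2\rho^a)}{\log\rho}$ and similarly $\beta,\gamma$ for $|h_{rd}|^2\rho^b$, $|h_{sd}|^2\rho^c$. Multiplexing gain $r=\lim R/\log\rho$, diversity $d=-\lim \log P_e/\log\rho$, $x^+=\max(x,0)$. Static QMF: the relay listens for half of the total duration, quantizes its received signal at the noise level, maps it to a random codeword and transmits it in the second half; the schedule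 is independent of channel realizations. With a relay listening fraction $t$, the QMF rate is within a constant of the half-duplex cut-set expression, whose high-SNR exponent is $r_{h.d.}(t)$, so that the scheme is in outage iff $r_{h.d.}(1/2)\le r$; this yields the optimization formula in the claim. *)

theory Defs
  imports "HOL-Analysis.Analysis"
begin

text \<open>High-SNR exponent of the half-duplex cut-set bound with relay listening fraction t.\<close>
definition r_hd :: "real \<Rightarrow> real \<Rightarrow> real \<Rightarrow> real \<Rightarrow> real" where
  "r_hd t \<alpha> \<beta> \<gamma> = min (t * max \<alpha> \<gamma> + (1 - t) * \<gamma>) (t * \<gamma> + (1 - t) * max \<beta> \<gamma>)"

definition qmf_outage :: "real \<Rightarrow> real \<Rightarrow> real \<Rightarrow> real \<Rightarrow> (real \<times> real \<times> real) set" where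
  "qmf_outage a b c r = {(\<alpha>, \<beta>, \<gamma>). r_hd (1/2) \<alpha> \<beta> \<gamma> \<le> r \<and>
      0 \<le> \<alpha> \<and> \<alpha> \<le> a \<and> 0 \<le> \<beta> \<and> \<beta> \<le> b \<and> 0 \<le> \<gamma> \<and> \<gamma> \<le> c}"

definition d_QMF :: "real \<Rightarrow> real \<Rightarrow> real \<Rightarrow> real \<Rightarrow> real" where
  "d_QMF a b c r = Inf ((\<lambda>(\<alpha>, \<beta>, \<gamma>). a + b + c - \<alpha> - \<beta> - \<gamma>) ` qmf_outage a b c r)"

end

theory Submission
  imports Defs
begin

text \<open>At \<open>t = 1/2\<close> the outage condition only involves \<open>\<gamma>\<close> and the weaker hop \<open>min \<alpha> \<beta>\<close>,
  so outage in the three exponents reduces to a two-variable problem in \<open>\<mu> = min \<alpha> \<beta>\<close> and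
  \<open>\<gamma>\<close> with \<open>\<mu> \<le> min a b\<close>, which costs at least \<open>min a b - \<mu>\<close> in the relay exponents.
  The cheapest outage point puts \<open>\<gamma> = min c r\<close> and spends the remaining rate budget
  \<open>2r - \<gamma>\<close> on \<open>\<mu>\<close>.\<close>

definition qmf_dmt :: "real \<Rightarrow> real \<Rightarrow> real \<Rightarrow> real" where
  "qmf_dmt m c r =
     (if c > m then max (m - r) 0 + max (c - r) 0 else max (m + c - 2 * r) 0)"

lemma r_hd_half: "r_hd (1/2) \<alpha> \<beta> \<gamma> = (\<gamma> + max (min \<alpha> \<beta>) \<gamma>) / 2"
  unfolding r_hd_def by (simp add: min_def max_def)

lemma qmf_outage_iff:
  "(\<alpha>, \<beta>, \<gamma>) \<in> qmf_outage a b c r \<longleftrightarrow>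
     \<gamma> + max (min \<alpha> \<beta>) \<gamma> \<le> 2 * r \<and>
     0 \<le> \<alpha> \<and> \<alpha> \<le> a \<and> 0 \<le> \<beta> \<and> \<beta> \<le> b \<and> 0 \<le> \<gamma> \<and> \<gamma> \<le> c"
  unfolding qmf_outage_def r_hd_half by auto

lemma diversity_ge_weaker_hop:
  fixes a b \<alpha> \<beta> :: real
  assumes "\<alpha> \<le> a" "\<beta> \<le> b"
  shows "min a b - min \<alpha> \<beta> \<le> a + b - \<alpha> - \<beta>"
  using assms by (simp add: min_def)

lemma qmf_dmt_le:
  fixes m c r \<mu> \<gamma> :: real
  assumes "0 \<le> \<mu>" "\<mu> \<le> m" "0 \<le> \<gamma>" "\<gamma> \<le> c" "\<gamma> + max \<mu> \<gamma> \<le> 2 * r"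
  shows "qmf_dmt m c r \<le> m + c - \<mu> - \<gamma>"
  using assms unfolding qmf_dmt_def by (auto simp: max_def split: if_splits)

lemma qmf_dmt_attained:
  fixes m c r :: real
  assumes "0 \<le> m" "0 \<le> c" "0 \<le> r"
  defines "\<gamma> \<equiv> min c r" and "\<mu> \<equiv> min m (2 * r - min c r)"
  shows "0 \<le> \<mu>" "\<mu> \<le> m" "0 \<le> \<gamma>" "\<gamma> \<le> c" "\<gamma> + max \<mu> \<gamma> \<le> 2 * r"
    and "m + c - \<mu> - \<gamma> = qmf_dmt m c r"
  using assms unfolding qmf_dmt_def by (auto simp: min_def max_def)

lemma qmf_outage_diversity_ge:
  assumes "(\<alpha>, \<beta>, \<gamma>) \<in> qmf_outage a b c r"
  shows "qmf_dmt (min a b) c r \<le> a + b + c - \<alpha> - \<beta> - \<gamma>"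
proof -
  from assms have bounds: "\<alpha> \<le> a" "\<beta> \<le> b" "0 \<le> \<gamma>" "\<gamma> \<le> c"
    and rate: "\<gamma> + max (min \<alpha> \<beta>) \<gamma> \<le> 2 * r"
    and "0 \<le> min \<alpha> \<beta>" "min \<alpha> \<beta> \<le> min a b"
    by (auto simp: qmf_outage_iff min_def)
  then have "qmf_dmt (min a b) c r \<le> min a b + c - min \<alpha> \<beta> - \<gamma>"
    by (intro qmf_dmt_le)
  also have "\<dots> \<le> a + b + c - \<alpha> - \<beta> - \<gamma>"
    using diversity_ge_weaker_hop[OF bounds(1,2)] by simp
  finally show ?thesis .
qed

lemma qmf_outage_diversity_attained:
  fixes a b c r :: real
  assumes "0 \<le> a" "0 \<le> b" "0 \<le> c" "0 \<le> r"
  obtains \<alpha> \<beta> \<gamma> where "(\<alpha>, \<beta>, \<gamma>) \<in> qmf_outage a b c r"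
    and "a + b + c - \<alpha> - \<beta> - \<gamma> = qmf_dmt (min a b) c r"
proof -
  let ?\<gamma> = "min c r" and ?\<mu> = "min (min a b) (2 * r - min c r)"
  have "min a b \<ge> 0" using assms by simp
  note opt = qmf_dmt_attained[OF this assms(3,4)]
  show ?thesis
  proof (cases "a \<le> b")
    case True
    with opt show ?thesis
      by (intro that[of ?\<mu> b ?\<gamma>]) (auto simp: qmf_outage_iff min_def)
  next
    case False
    with opt show ?thesis
      by (intro that[of a ?\<mu> ?\<gamma>]) (auto simp: qmf_outage_iff min_def)
  qed
qed

theorem lemma2:
  fixes a b c r :: real
  assumes "0 \<le> a" "0 \<le> b" "0 \<le> c" "0 \<le> r"
  shows "d_QMF a b c r =
           (if c > min a b then max (min a b - r) 0 + max (c - r) 0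
            else max (min a b + c - 2 * r) 0)
         \<and> (\<exists>(\<alpha>, \<beta>, \<gamma>) \<in> qmf_outage a b c r. a + b + c - \<alpha> - \<beta> - \<gamma> = d_QMF a b c r)"
proof -
  obtain \<alpha> \<beta> \<gamma> where w: "(\<alpha>, \<beta>, \<gamma>) \<in> qmf_outage a b c r"
    and w_div: "a + b + c - \<alpha> - \<beta> - \<gamma> = qmf_dmt (min a b) c r"
    using qmf_outage_diversity_attained[OF assms] .
  have "d_QMF a b c r = qmf_dmt (min a b) c r"
    unfolding d_QMF_def
  proof (rule cInf_eq_minimum)
    show "qmf_dmt (min a b) c r \<in> (\<lambda>(\<alpha>, \<beta>, \<gamma>). a + b + c - \<alpha> - \<beta> - \<gamma>) ` qmf_outage a b c r"
      using w w_div by force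
  qed (auto dest: qmf_outage_diversity_ge)
  with w w_div show ?thesis
    unfolding qmf_dmt_def by (auto intro!: bexI[OF _ w])
qed

end
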